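(* Let $\mathcal{A}$ be a parameter-preserving reduction algorithm (polynomial-time) for Max $k$-Weight SAT that preserves the set of variables, i.e. on input $(\Phi = (\mathcal{V}, \mathcal{C}), k)$ it produces $(\Phi' = (\mathcal{V}', \mathcal{C}'), k)$ with $\mathcal{V}' = \mathcal{V}$. Suppose there exist $\delta, h \ge 0$ and $s > 0$ (where $h, s$ may depend on $(\Phi, k)$) such that for every solution $Y \subseteq \mathcal{V}$ with $|Y| \le k$, $$|\mathrm{val}_{\Phi}(Y) - s \cdot \mathrm{val}_{\Phi'}(Y) - h| \le \delta \cdot \mathrm{OPT}_{\Phi, k}.$$ Then $(\mathcal{A}, \mathrm{Iden})$ is a $(1, 2\delta)$-APPA, where $\mathrm{Iden}$ is the solution-lifting algorithm that outputs its input solution unchanged.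
   Context: Max $k$-Weight SAT: input is a CNF formula $\Phi = (\mathcal{V}, \mathcal{C})$ with variable set $\mathcal{V}$ and a multiset $\mathcal{C}$ of clauses, plus a positive integer $k$. A solution is $Y \subseteq \mathcal{V}$ with $|Y| \le k$ (variables set to true); $\mathrm{val}_\Phi(Y)$ is the number of clauses (with multiplicity) satisfied by $Y$; $\mathrm{OPT}_{\Phi,k} = \max_{|Y|\le k}\mathrm{val}_\Phi(Y)$. A solution is $\beta$-approximate if its value is at least $\beta\cdot\mathrm{OPT}$. An $(\alpha,\gamma)$-APPA is a pair of polynomial-time algorithms $(\mathcal{A},\mathcal{B})$ where $\mathcal{A}$ maps an instance $(I,k)$ to an instance $(I',k')$ and $\mathcal{B}$ maps any $\beta$-approximate solution of $(I',k')$ to an $(\alpha\beta-\gamma)$-approximate solution of $(I,k)$. Parameter-preserving means $k'=k$. *)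

theory Defs
  imports Complex_Main "HOL-Library.Multiset"
begin

datatype 'v literal = Pos 'v | Neg 'v

fun lit_var :: "'v literal \<Rightarrow> 'v" where
  "lit_var (Pos x) = x" | "lit_var (Neg x) = x"

type_synonym 'v clause = "'v literal set"

type_synonym 'v cnf = "'v set \<times> 'v clause multiset"

definition vars :: "'v cnf \<Rightarrow> 'v set" where "vars \<Phi> = fst \<Phi>"
definition clauses :: "'v cnf \<Rightarrow> 'v clause multiset" where "clauses \<Phi> = snd \<Phi>"

definition wf_cnf :: "'v cnf \<Rightarrow> bool" where
  "wf_cnf \<Phi> \<longleftrightarrow> finite (vars \<Phi>) \<and>
     (\<forall>c \<in># clauses \<Phi>. finite c \<and> lit_var ` c \<subseteq> vars \<Phi>)"

fun lit_sat :: "'v set \<Rightarrow> 'v literal \<Rightarrow> bool" where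
  "lit_sat Y (Pos x) = (x \<in> Y)" | "lit_sat Y (Neg x) = (x \<notin> Y)"

definition clause_sat :: "'v set \<Rightarrow> 'v clause \<Rightarrow> bool" where
  "clause_sat Y c \<longleftrightarrow> (\<exists>l\<in>c. lit_sat Y l)"

definition val :: "'v cnf \<Rightarrow> 'v set \<Rightarrow> real" where
  "val \<Phi> Y = real (size (filter_mset (clause_sat Y) (clauses \<Phi>)))"

definition feasible :: "'v cnf \<Rightarrow> nat \<Rightarrow> 'v set \<Rightarrow> bool" where
  "feasible \<Phi> k Y \<longleftrightarrow> Y \<subseteq> vars \<Phi> \<and> card Y \<le> k"

definition OPT :: "'v cnf \<Rightarrow> nat \<Rightarrow> real" where
  "OPT \<Phi> k = Max (val \<Phi> ` {Y. feasible \<Phi> k Y})"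

definition approx_sol :: "'v cnf \<Rightarrow> nat \<Rightarrow> real \<Rightarrow> 'v set \<Rightarrow> bool" where
  "approx_sol \<Phi> k \<beta> Y \<longleftrightarrow> feasible \<Phi> k Y \<and> val \<Phi> Y \<ge> \<beta> * OPT \<Phi> k"

text \<open>(alpha,gamma)-APPA (approximation-preserving property, polynomial-time
  requirement omitted): for every well-formed instance (Phi,k) with k positive and every
  beta in [0,1], B maps any beta-approximate solution of A(Phi,k) to an
  (alpha*beta - gamma)-approximate solution of (Phi,k).\<close>
definition is_APPA ::
  "real \<Rightarrow> real \<Rightarrow> ('v cnf \<times> nat \<Rightarrow> 'w cnf \<times> nat)
     \<Rightarrow> ('v cnf \<times> nat \<Rightarrow> 'w set \<Rightarrow> 'v set) \<Rightarrow> bool" where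
  "is_APPA \<alpha> \<gamma> A B \<longleftrightarrow>
     (\<forall>\<Phi> k \<beta> Y. wf_cnf \<Phi> \<and> k > 0 \<and> 0 \<le> \<beta> \<and> \<beta> \<le> 1 \<and>
        approx_sol (fst (A (\<Phi>, k))) (snd (A (\<Phi>, k))) \<beta> Y \<longrightarrow>
        approx_sol \<Phi> k (\<alpha> * \<beta> - \<gamma>) (B (\<Phi>, k) Y))"

definition Iden :: "'v cnf \<times> nat \<Rightarrow> 'v set \<Rightarrow> 'v set" where
  "Iden I Y = Y"

end

theory Submission
  imports Defs
begin

text \<open>Since both formulas live on the same variables, a solution Y of the reduced instance is
  compared with an optimum Y* of the original one. Up to the error \<delta> OPT, val on the
  original is the affine image s val' + h of val on the reduced instance; as s > 0 and h \<ge> 0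
  this map sends val'(Y) \<ge> \<beta> val'(Y*) to val(Y) \<ge> \<beta> val(Y*) minus one error term for Y and
  one for Y*, i.e. val(Y) \<ge> (\<beta> - 2\<delta>) OPT.\<close>

lemma finite_feasible: "finite (vars \<Phi>) \<Longrightarrow> finite {Y. feasible \<Phi> k Y}"
  unfolding feasible_def by (rule finite_subset[of _ "Pow (vars \<Phi>)"]) auto

lemma feasible_empty: "feasible \<Phi> k {}"
  by (simp add: feasible_def)

lemma feasible_cong_vars: "vars \<Psi> = vars \<Phi> \<Longrightarrow> feasible \<Psi> k Y = feasible \<Phi> k Y"
  by (simp add: feasible_def)

lemma val_le_OPT: "finite (vars \<Phi>) \<Longrightarrow> feasible \<Phi> k Y \<Longrightarrow> val \<Phi> Y \<le> OPT \<Phi> k"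
  unfolding OPT_def by (rule Max_ge) (auto simp: finite_feasible)

lemma OPT_attained:
  assumes "finite (vars \<Phi>)"
  obtains Y where "feasible \<Phi> k Y" and "val \<Phi> Y = OPT \<Phi> k"
proof -
  have "OPT \<Phi> k \<in> val \<Phi> ` {Y. feasible \<Phi> k Y}"
    unfolding OPT_def using finite_feasible[OF assms] feasible_empty[of \<Phi> k] by (intro Max_in) auto
  then show ?thesis using that by auto
qed

lemma affine_closeness_transfers_ratio:
  fixes v w v' w' s h \<beta> \<epsilon> :: real
  assumes "\<bar>v - s * w - h\<bar> \<le> \<epsilon>" and "\<bar>v' - s * w' - h\<bar> \<le> \<epsilon>"
    and "s > 0" and "h \<ge> 0" and "0 \<le> \<beta>" and "\<beta> \<le> 1" and "w \<ge> \<beta> * w'"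
  shows "v \<ge> \<beta> * v' - 2 * \<epsilon>"
proof -
  have "\<epsilon> \<ge> 0" using assms(1) by linarith
  have "v \<ge> s * w + h - \<epsilon>" using assms(1) by (simp add: abs_le_iff)
  moreover have "s * w \<ge> \<beta> * (s * w')"
    using assms(3,7) by (metis mult.left_commute mult_left_mono less_imp_le)
  moreover have "h \<ge> \<beta> * h" using assms(4-6) by (simp add: mult_left_le_one_le)
  moreover have "\<beta> * (s * w' + h) \<ge> \<beta> * (v' - \<epsilon>)"
    using assms(2,5) by (intro mult_left_mono) (auto simp: abs_le_iff)
  moreover have "\<beta> * \<epsilon> \<le> \<epsilon>" using \<open>\<epsilon> \<ge> 0\<close> assms(5,6) by (simp add: mult_left_le_one_le)
  ultimately show ?thesis by (simp add: algebra_simps)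
qed

lemma approx_sol_transfer_same_vars:
  assumes fin: "finite (vars \<Phi>)" and same_vars: "vars \<Psi> = vars \<Phi>"
    and "s > 0" and "h \<ge> 0" and "0 \<le> \<beta>" and "\<beta> \<le> 1"
    and close: "\<And>Y. feasible \<Phi> k Y \<Longrightarrow> \<bar>val \<Phi> Y - s * val \<Psi> Y - h\<bar> \<le> \<epsilon>"
    and approx: "approx_sol \<Psi> k \<beta> Y"
  shows "feasible \<Phi> k Y" and "val \<Phi> Y \<ge> \<beta> * OPT \<Phi> k - 2 * \<epsilon>"
proof -
  show feas: "feasible \<Phi> k Y"
    using approx feasible_cong_vars[OF same_vars] by (simp add: approx_sol_def)
  obtain Y\<^sub>o\<^sub>p\<^sub>t where opt: "feasible \<Phi> k Y\<^sub>o\<^sub>p\<^sub>t" "val \<Phi> Y\<^sub>o\<^sub>p\<^sub>t = OPT \<Phi> k"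
    using OPT_attained[OF fin] by blast
  have "val \<Psi> Y\<^sub>o\<^sub>p\<^sub>t \<le> OPT \<Psi> k"
    using val_le_OPT[of \<Psi> k] fin same_vars opt(1) feasible_cong_vars[OF same_vars] by simp
  then have "val \<Psi> Y \<ge> \<beta> * val \<Psi> Y\<^sub>o\<^sub>p\<^sub>t"
    using approx \<open>0 \<le> \<beta>\<close> unfolding approx_sol_def by (meson mult_left_mono order_trans)
  then show "val \<Phi> Y \<ge> \<beta> * OPT \<Phi> k - 2 * \<epsilon>"
    using affine_closeness_transfers_ratio[OF close[OF feas] close[OF opt(1)]] opt(2) assms(3-6)
    by simp
qed

theorem lemma2p3:
  fixes A :: "'v cnf \<times> nat \<Rightarrow> 'v cnf \<times> nat"
    and \<delta> :: real
    and h s :: "'v cnf \<Rightarrow> nat \<Rightarrow> real"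
  assumes preserve: "\<forall>\<Phi> k. wf_cnf \<Phi> \<and> k > 0 \<longrightarrow>
             wf_cnf (fst (A (\<Phi>, k))) \<and> snd (A (\<Phi>, k)) = k \<and> vars (fst (A (\<Phi>, k))) = vars \<Phi>"
    and delta: "\<delta> \<ge> 0"
    and hs: "\<forall>\<Phi> k. wf_cnf \<Phi> \<and> k > 0 \<longrightarrow> h \<Phi> k \<ge> 0 \<and> s \<Phi> k > 0"
    and close: "\<forall>\<Phi> k Y. wf_cnf \<Phi> \<and> k > 0 \<and> feasible \<Phi> k Y \<longrightarrow>
             \<bar>val \<Phi> Y - s \<Phi> k * val (fst (A (\<Phi>, k))) Y - h \<Phi> k\<bar> \<le> \<delta> * OPT \<Phi> k"
  shows "is_APPA 1 (2 * \<delta>) A Iden"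
  unfolding is_APPA_def Iden_def
proof (intro allI impI, elim conjE)
  fix \<Phi> :: "'v cnf" and k \<beta> Y
  assume wf: "wf_cnf \<Phi>" and "0 < k" and "0 \<le> \<beta>" and "\<beta> \<le> 1"
    and approx: "approx_sol (fst (A (\<Phi>, k))) (snd (A (\<Phi>, k))) \<beta> Y"
  have fin: "finite (vars \<Phi>)" using wf by (simp add: wf_cnf_def)
  have A_props: "snd (A (\<Phi>, k)) = k" "vars (fst (A (\<Phi>, k))) = vars \<Phi>"
    using preserve wf \<open>0 < k\<close> by blast+
  have "h \<Phi> k \<ge> 0" "s \<Phi> k > 0" using hs wf \<open>0 < k\<close> by blast+
  have close_\<Phi>: "\<bar>val \<Phi> Y' - s \<Phi> k * val (fst (A (\<Phi>, k))) Y' - h \<Phi> k\<bar> \<le> \<delta> * OPT \<Phi> k"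
    if "feasible \<Phi> k Y'" for Y'
    using close wf \<open>0 < k\<close> that by blast
  have "approx_sol (fst (A (\<Phi>, k))) k \<beta> Y" using approx A_props(1) by simp
  from approx_sol_transfer_same_vars[OF fin A_props(2) \<open>s \<Phi> k > 0\<close> \<open>h \<Phi> k \<ge> 0\<close>
      \<open>0 \<le> \<beta>\<close> \<open>\<beta> \<le> 1\<close> close_\<Phi> this]
  show "approx_sol \<Phi> k (1 * \<beta> - 2 * \<delta>) Y"
    by (simp add: approx_sol_def algebra_simps)
qed

end
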